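(* For every integer $n>24$, the generalized Petersen graph $GP(n,4)$ is not $1$-distance-balanced.
   Context: For a connected graph $G$ and $x,y\in V(G)$, $d_G(x,y)$ denotes the distance. Let $W_{xy}=\{w\in V(G): d_G(w,x)<d_G(w,y)\}$. $G$ is called $\ell$-distance-balanced if $|W_{xy}|=|W_{yx}|$ for every pair $x,y\in V(G)$ with $d_G(x,y)=\ell$. For integers $n\ge 3$ and $1\le k<n/2$, the generalized Petersen graph $GP(n,k)$ has vertex set $\{u_i: i\in\mathbb{Z}_n\}\cup\{v_i: i\in\mathbb{Z}_n\}$ and edge set $\{u_iu_{i+1}: i\in\mathbb{Z}_n\}\cup\{v_iv_{i+k}: i\in\mathbb{Z}_n\}\cup\{u_iv_i: i\in\mathbb{Z}_n\}$. *)

theory Defs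
  imports Main
begin

text \<open>Generic notions for a graph given by a vertex set Vs and a symmetric
adjacency relation E (edges only between vertices of Vs).\<close>

definition gdist :: "('a \<Rightarrow> 'a \<Rightarrow> bool) \<Rightarrow> 'a \<Rightarrow> 'a \<Rightarrow> nat" where
  "gdist E x y = (LEAST m. (E ^^ m) x y)"

definition Wset :: "'a set \<Rightarrow> ('a \<Rightarrow> 'a \<Rightarrow> bool) \<Rightarrow> 'a \<Rightarrow> 'a \<Rightarrow> 'a set" where
  "Wset Vs E x y = {w \<in> Vs. gdist E w x < gdist E w y}"

definition distance_balanced :: "'a set \<Rightarrow> ('a \<Rightarrow> 'a \<Rightarrow> bool) \<Rightarrow> nat \<Rightarrow> bool" where
  "distance_balanced Vs E l \<longleftrightarrow>
     (\<forall>x\<in>Vs. \<forall>y\<in>Vs. gdist E x y = l \<longrightarrow> card (Wset Vs E x y) = card (Wset Vs E y x))"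

text \<open>Generalized Petersen graph GP(n,k); indices of Z_n are represented by 0..n-1.\<close>

datatype gpv = U nat | V nat

definition gp_verts :: "nat \<Rightarrow> gpv set" where
  "gp_verts n = {U i | i. i < n} \<union> {V i | i. i < n}"

definition gp_adj :: "nat \<Rightarrow> nat \<Rightarrow> gpv \<Rightarrow> gpv \<Rightarrow> bool" where
  "gp_adj n k a b \<longleftrightarrow>
     (\<exists>i<n. (a, b) \<in> {(U i, U ((i + 1) mod n)), (U ((i + 1) mod n), U i),
                       (V i, V ((i + k) mod n)), (V ((i + k) mod n), V i),
                       (U i, V i), (V i, U i)})"

end

theory Submission
  imports Defs
begin

text \<open>Write every vertex of GP(n,k) as u_(a+kb) or v_(a+kb) with integers a, b. Going
  around the rim costs one edge per unit of a, the inner cycle one edge per unit of b, so a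
  walk from u_0 has length at least |a| + |b|, plus one spoke to end on the inner cycle and
  two spokes to return to the rim after using inner edges, whereas from v_0 the bound
  |a| + |b| + 1 is attained. For k = 4 and n > 24 this makes the n - 7 rim vertices
  u_4, ..., u_(n-4) and the seven inner vertices v_(4b), |b| <= 3, strictly closer to v_0
  than to u_0, while u_3 is not closer to u_0. Hence |W(v_0,u_0)| >= n > n - 1 >= |W(u_0,v_0)|
  for the edge u_0 v_0.\<close>

section \<open>Walks and distances in symmetric relations\<close>

lemma symp_relpowp: "symp R \<Longrightarrow> symp (R ^^ m)"
proof (induction m)
  case 0
  then show ?case by (simp add: symp_def)
next
  case (Suc m)
  show ?case
  proof (rule sympI)
    fix x z
    assume "(R ^^ Suc m) x z"
    then obtain y where "(R ^^ m) x y" "R y z" by (rule relpowp_Suc_E)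
    with Suc show "(R ^^ Suc m) z x" by (metis relpowp_Suc_I2 sympD)
  qed
qed

lemma gdist_commute: "symp R \<Longrightarrow> gdist R x y = gdist R y x"
  unfolding gdist_def by (metis symp_relpowp sympD)

lemma gdist_le: "(R ^^ m) x y \<Longrightarrow> gdist R x y \<le> m"
  unfolding gdist_def by (rule Least_le)

lemma relpowp_gdist: "(R ^^ m) x y \<Longrightarrow> (R ^^ gdist R x y) x y"
  unfolding gdist_def by (rule LeastI)

lemma gdist_eq_1:
  assumes "R x y" and "x \<noteq> y"
  shows "gdist R x y = 1"
  unfolding gdist_def
proof (rule Least_equality)
  show "(R ^^ 1) x y" using \<open>R x y\<close> by auto
  show "1 \<le> m" if "(R ^^ m) x y" for m
    using that \<open>x \<noteq> y\<close> by (cases m) auto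
qed

lemma relpowp_int_chain_nat:
  assumes step: "\<And>t. R (f t) (f (t + 1))"
  shows "(R ^^ m) (f t) (f (t + int m))"
proof (induction m arbitrary: t)
  case 0
  then show ?case by simp
next
  case (Suc m)
  have "(R ^^ Suc m) (f t) (f (t + 1 + int m))"
    by (rule relpowp_Suc_I2[OF step Suc])
  then show ?case by (simp add: add_ac)
qed

lemma relpowp_int_chain:
  assumes "symp R" and step: "\<And>t. R (f t) (f (t + 1))"
  shows "(R ^^ nat \<bar>d\<bar>) (f t) (f (t + d))"
proof (cases "0 \<le> d")
  case True
  then show ?thesis using relpowp_int_chain_nat[of R f, OF step, of "nat d" t] by simp
next
  case False
  have "(R ^^ nat \<bar>d\<bar>) (f (t + d)) (f (t + d + int (nat \<bar>d\<bar>)))"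
    by (rule relpowp_int_chain_nat[of R f, OF step])
  with False have "(R ^^ nat \<bar>d\<bar>) (f (t + d)) (f t)" by simp
  then show ?thesis using symp_relpowp[OF \<open>symp R\<close>] by (blast dest: sympD)
qed

section \<open>Residues modulo n as vertex indices\<close>

definition cyc :: "nat \<Rightarrow> int \<Rightarrow> nat" where
  "cyc n x = nat (x mod int n)"

lemma cyc_less: "0 < n \<Longrightarrow> cyc n x < n"
  unfolding cyc_def by (simp add: nat_less_iff)

lemma cyc_eq_iff: "0 < n \<Longrightarrow> cyc n x = cyc n y \<longleftrightarrow> int n dvd x - y"
  unfolding cyc_def by (simp add: eq_nat_nat_iff mod_eq_dvd_iff)

lemma cyc_of_nat [simp]: "i < n \<Longrightarrow> cyc n (int i) = i"
  unfolding cyc_def by (simp add: zmod_int)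

lemma cyc_0 [simp]: "cyc n 0 = 0"
  unfolding cyc_def by simp

lemma cyc_add_cong: "0 < n \<Longrightarrow> cyc n x = cyc n y \<Longrightarrow> cyc n (x + c) = cyc n (y + c)"
  by (simp add: cyc_eq_iff)

lemma cyc_add_mod:
  assumes "0 < n"
  shows "(cyc n x + c) mod n = cyc n (x + int c)"
proof -
  have "int ((cyc n x + c) mod n) = (x mod int n + int c) mod int n"
    unfolding cyc_def using assms by (simp add: zmod_int)
  also have "\<dots> = (x + int c) mod int n"
    by (simp add: mod_add_left_eq)
  finally show ?thesis
    unfolding cyc_def by (metis nat_int)
qed

lemma cyc_eq_imp_eq_or_far: "0 < n \<Longrightarrow> cyc n x = cyc n y \<Longrightarrow> x = y \<or> int n \<le> \<bar>x - y\<bar>"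
  using dvd_imp_le_int[of "x - y" "int n"] by (auto simp: cyc_eq_iff)

lemma gp_verts_eq: "gp_verts n = U ` {..<n} \<union> V ` {..<n}"
  unfolding gp_verts_def by auto

lemma finite_gp_verts: "finite (gp_verts n)"
  unfolding gp_verts_eq by simp

lemma card_gp_verts: "card (gp_verts n) = 2 * n"
  unfolding gp_verts_eq by (subst card_Un_disjoint) (auto simp: card_image inj_on_def)

lemma symp_gp_adj: "symp (gp_adj n k)"
  unfolding gp_adj_def symp_def by blast

lemma gp_adj_rim: "0 < n \<Longrightarrow> gp_adj n k (U (cyc n x)) (U (cyc n (x + 1)))"
  using cyc_add_mod[of n x 1] cyc_less[of n x] unfolding gp_adj_def by force

lemma gp_adj_inner: "0 < n \<Longrightarrow> gp_adj n k (V (cyc n x)) (V (cyc n (x + int k)))"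
  using cyc_add_mod[of n x k] cyc_less[of n x] unfolding gp_adj_def by force

lemma gp_adj_spoke: "i < n \<Longrightarrow> gp_adj n k (U i) (V i)"
  unfolding gp_adj_def by blast

lemma gp_adj_cases:
  assumes "0 < n" and "gp_adj n k a b"
  obtains (rim) x e where "a = U (cyc n x)" "b = U (cyc n (x + e))" "\<bar>e\<bar> = 1"
    | (inner) x e where "a = V (cyc n x)" "b = V (cyc n (x + int k * e))" "\<bar>e\<bar> = 1"
    | (spoke) i where "a = U i \<and> b = V i \<or> a = V i \<and> b = U i"
proof -
  from \<open>gp_adj n k a b\<close> obtain i where "i < n" and ab:
    "(a, b) \<in> {(U i, U ((i + 1) mod n)), (U ((i + 1) mod n), U i),
                (V i, V ((i + k) mod n)), (V ((i + k) mod n), V i), (U i, V i), (V i, U i)}"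
    unfolding gp_adj_def by blast
  have i: "i = cyc n (int i)" and
    i1: "(i + 1) mod n = cyc n (int i + 1)" and
    ik: "(i + k) mod n = cyc n (int i + int k)"
    using \<open>i < n\<close> cyc_add_mod[OF \<open>0 < n\<close>, of "int i" 1] cyc_add_mod[OF \<open>0 < n\<close>, of "int i" k]
    by simp_all
  from ab consider
      "a = U (cyc n (int i))" "b = U (cyc n (int i + 1))"
    | "a = U (cyc n (int i + 1))" "b = U (cyc n (int i + 1 + - 1))"
    | "a = V (cyc n (int i))" "b = V (cyc n (int i + int k * 1))"
    | "a = V (cyc n (int i + int k))" "b = V (cyc n (int i + int k + int k * - 1))"
    | "a = U i \<and> b = V i \<or> a = V i \<and> b = U i"
    using i i1 ik by auto
  then show ?thesis
    by cases (fastforce intro: that)+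
qed

section \<open>Distances in GP(n,k)\<close>

lemma gp_walk_rim: "0 < n \<Longrightarrow> (gp_adj n k ^^ nat \<bar>d\<bar>) (U (cyc n x)) (U (cyc n (x + d)))"
  by (rule relpowp_int_chain) (simp_all add: symp_gp_adj gp_adj_rim)

lemma gp_walk_inner:
  assumes "0 < n"
  shows "(gp_adj n k ^^ nat \<bar>d\<bar>) (V (cyc n x)) (V (cyc n (x + int k * d)))"
proof -
  have "gp_adj n k (V (cyc n (x + int k * t))) (V (cyc n (x + int k * (t + 1))))" for t
    using gp_adj_inner[OF assms, where x="x + int k * t"] by (simp add: algebra_simps)
  from relpowp_int_chain[where f="\<lambda>t. V (cyc n (x + int k * t))", OF symp_gp_adj this, of d 0]
  show ?thesis by simp
qed

lemma gdist_V0_rim_le: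
  assumes "0 < n"
  shows "gdist (gp_adj n k) (V 0) (U (cyc n (a + int k * b))) \<le> nat \<bar>a\<bar> + nat \<bar>b\<bar> + 1"
proof -
  have "(gp_adj n k ^^ nat \<bar>b\<bar>) (V 0) (V (cyc n (int k * b)))"
    using gp_walk_inner[OF assms, where x=0 and d=b] by simp
  also have "gp_adj n k (V (cyc n (int k * b))) (U (cyc n (int k * b)))"
    using gp_adj_spoke[OF cyc_less[OF assms]] symp_gp_adj by (blast dest: sympD)
  also have "(gp_adj n k ^^ nat \<bar>a\<bar>) (U (cyc n (int k * b))) (U (cyc n (a + int k * b)))"
    using gp_walk_rim[OF assms, where x="int k * b" and d=a] by (simp add: add.commute)
  finally show ?thesis
    by (rule gdist_le[THEN order_trans]) simp
qed

lemma gdist_V0_inner_le: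
  assumes "0 < n"
  shows "gdist (gp_adj n k) (V 0) (V (cyc n (int k * b))) \<le> nat \<bar>b\<bar>"
  using gp_walk_inner[OF assms, where x=0 and d=b] by (simp add: gdist_le)

definition gp_cost_from_U0_le :: "nat \<Rightarrow> nat \<Rightarrow> nat \<Rightarrow> gpv \<Rightarrow> bool" where
  "gp_cost_from_U0_le n k m w \<longleftrightarrow> (\<exists>a b.
     w = U (cyc n (a + int k * b)) \<and> \<bar>a\<bar> + \<bar>b\<bar> + (if b = 0 then 0 else 2) \<le> int m \<or>
     w = V (cyc n (a + int k * b)) \<and> \<bar>a\<bar> + \<bar>b\<bar> + 1 \<le> int m)"

lemma gp_cost_from_U0_le_step:
  assumes "0 < n" and "gp_cost_from_U0_le n k m w" and "gp_adj n k w w'"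
  shows "gp_cost_from_U0_le n k (Suc m) w'"
proof -
  obtain a b where ab:
    "w = U (cyc n (a + int k * b)) \<and> \<bar>a\<bar> + \<bar>b\<bar> + (if b = 0 then 0 else 2) \<le> int m \<or>
     w = V (cyc n (a + int k * b)) \<and> \<bar>a\<bar> + \<bar>b\<bar> + 1 \<le> int m"
    using assms(2) unfolding gp_cost_from_U0_le_def by blast
  from \<open>0 < n\<close> \<open>gp_adj n k w w'\<close> show ?thesis
  proof (cases rule: gp_adj_cases)
    case (rim x e)
    with ab have x: "cyc n x = cyc n (a + int k * b)"
      and cost: "\<bar>a\<bar> + \<bar>b\<bar> + (if b = 0 then 0 else 2) \<le> int m" by auto
    have "w' = U (cyc n ((a + e) + int k * b))"
      using rim cyc_add_cong[OF \<open>0 < n\<close> x, of e] by (simp add: algebra_simps)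
    moreover have "\<bar>a + e\<bar> + \<bar>b\<bar> + (if b = 0 then 0 else 2) \<le> int (Suc m)"
      using cost \<open>\<bar>e\<bar> = 1\<close> abs_triangle_ineq[of a e] by simp
    ultimately show ?thesis
      unfolding gp_cost_from_U0_le_def by blast
  next
    case (inner x e)
    with ab have x: "cyc n x = cyc n (a + int k * b)" and cost: "\<bar>a\<bar> + \<bar>b\<bar> + 1 \<le> int m"
      by auto
    have "w' = V (cyc n (a + int k * (b + e)))"
      using inner cyc_add_cong[OF \<open>0 < n\<close> x, of "int k * e"] by (simp add: algebra_simps)
    moreover have "\<bar>a\<bar> + \<bar>b + e\<bar> + 1 \<le> int (Suc m)"
      using cost \<open>\<bar>e\<bar> = 1\<close> abs_triangle_ineq[of b e] by simp
    ultimately show ?thesis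
      unfolding gp_cost_from_U0_le_def by blast
  next
    case (spoke i)
    then have "w' = U (cyc n (a + int k * b)) \<and> \<bar>a\<bar> + \<bar>b\<bar> + (if b = 0 then 0 else 2) \<le> int (Suc m) \<or>
      w' = V (cyc n (a + int k * b)) \<and> \<bar>a\<bar> + \<bar>b\<bar> + 1 \<le> int (Suc m)"
      using ab by (cases "b = 0") auto
    then show ?thesis
      unfolding gp_cost_from_U0_le_def by blast
  qed
qed

lemma gp_cost_from_U0_le_relpowp:
  "0 < n \<Longrightarrow> (gp_adj n k ^^ m) (U 0) w \<Longrightarrow> gp_cost_from_U0_le n k m w"
proof (induction m arbitrary: w)
  case 0
  then have "w = U (cyc n (0 + int k * 0))" by simp
  then show ?case unfolding gp_cost_from_U0_le_def by (intro exI[of _ 0]) simp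
next
  case (Suc m)
  then obtain y where "(gp_adj n k ^^ m) (U 0) y" "gp_adj n k y w" by (blast elim: relpowp_Suc_E)
  with Suc show ?case by (blast intro: gp_cost_from_U0_le_step)
qed

lemma gp_reachable_from_U0:
  assumes "w \<in> gp_verts n"
  shows "\<exists>m. (gp_adj n k ^^ m) (U 0) w"
proof -
  obtain i where "i < n" and w: "w = U i \<or> w = V i"
    using assms unfolding gp_verts_def by blast
  then have "0 < n" by simp
  with \<open>i < n\<close> have rim: "(gp_adj n k ^^ i) (U 0) (U i)"
    using gp_walk_rim[OF \<open>0 < n\<close>, where x=0 and d="int i"] by simp
  show ?thesis
    using w rim relpowp_Suc_I[OF rim gp_adj_spoke[OF \<open>i < n\<close>]] by blast
qed

lemma gp_cost_from_U0_le_gdist: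
  "0 < n \<Longrightarrow> w \<in> gp_verts n \<Longrightarrow> gp_cost_from_U0_le n k (gdist (gp_adj n k) (U 0) w) w"
  using gp_reachable_from_U0 relpowp_gdist gp_cost_from_U0_le_relpowp by metis

lemma gdist_U0_rim_ge:
  assumes "i < n"
  obtains a b where "i = cyc n (a + int k * b)"
    and "\<bar>a\<bar> + \<bar>b\<bar> + (if b = 0 then 0 else 2) \<le> int (gdist (gp_adj n k) (U 0) (U i))"
  using gp_cost_from_U0_le_gdist[of n "U i" k] assms
  unfolding gp_cost_from_U0_le_def gp_verts_def by auto

lemma gdist_U0_inner_ge:
  assumes "i < n"
  obtains a b where "i = cyc n (a + int k * b)"
    and "\<bar>a\<bar> + \<bar>b\<bar> + 1 \<le> int (gdist (gp_adj n k) (U 0) (V i))"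
  using gp_cost_from_U0_le_gdist[of n "V i" k] assms
  unfolding gp_cost_from_U0_le_def gp_verts_def by auto

section \<open>The edge \<open>u\<^sub>0v\<^sub>0\<close> of GP(n,4)\<close>

lemma gp4_rim_closer_to_V0:
  assumes "4 \<le> i" and "i + 4 \<le> n"
  shows "gdist (gp_adj n 4) (V 0) (U i) < gdist (gp_adj n 4) (U 0) (U i)"
proof -
  have "0 < n" "i < n" using assms by simp_all
  obtain a b where i: "i = cyc n (a + 4 * b)"
    and cost: "\<bar>a\<bar> + \<bar>b\<bar> + (if b = 0 then 0 else 2) \<le> int (gdist (gp_adj n 4) (U 0) (U i))"
    using gdist_U0_rim_ge[OF \<open>i < n\<close>, where k=4] by auto
  show ?thesis
  proof (cases "b = 0")
    case False
    then show ?thesis using gdist_V0_rim_le[OF \<open>0 < n\<close>, where k=4 and a=a and b=b] i cost by simp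
  next
    case True
    with i have "cyc n a = cyc n (int i)" using \<open>i < n\<close> by simp
    then have "4 \<le> \<bar>a\<bar>"
      using cyc_eq_imp_eq_or_far[OF \<open>0 < n\<close>] assms by fastforce
    then obtain s where "\<bar>s\<bar> = 1" and s: "\<bar>a - 4 * s\<bar> = \<bar>a\<bar> - 4"
      by (cases "a < 0") (auto intro: that[of "-1"] that[of 1])
    txt \<open>Through \<open>v\<^sub>4\<^sub>s\<close> the vertex is reached from \<open>v\<^sub>0\<close> in \<open>|a| - 2\<close> steps.\<close>
    have "gdist (gp_adj n 4) (V 0) (U i) \<le> nat \<bar>a - 4 * s\<bar> + nat \<bar>s\<bar> + 1"
      using gdist_V0_rim_le[OF \<open>0 < n\<close>, where k=4 and a="a - 4 * s" and b=s] i True by simp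
    with s \<open>\<bar>s\<bar> = 1\<close> \<open>4 \<le> \<bar>a\<bar>\<close> cost True show ?thesis by simp
  qed
qed

lemma gp4_inner_closer_to_V0:
  assumes "24 < n" and "\<bar>b\<bar> \<le> 3"
  shows "gdist (gp_adj n 4) (V 0) (V (cyc n (4 * b))) < gdist (gp_adj n 4) (U 0) (V (cyc n (4 * b)))"
proof -
  have "0 < n" using assms by simp
  obtain a' b' where j: "cyc n (4 * b) = cyc n (a' + 4 * b')"
    and cost: "\<bar>a'\<bar> + \<bar>b'\<bar> + 1 \<le> int (gdist (gp_adj n 4) (U 0) (V (cyc n (4 * b))))"
    using gdist_U0_inner_ge[OF cyc_less[OF \<open>0 < n\<close>], where k=4] by auto
  have "\<bar>b\<bar> \<le> \<bar>a'\<bar> + \<bar>b'\<bar>"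
    using cyc_eq_imp_eq_or_far[OF \<open>0 < n\<close> j] assms by linarith
  then show ?thesis
    using gdist_V0_inner_le[OF \<open>0 < n\<close>, where k=4 and b=b] cost by simp
qed

lemma gp4_U3_not_closer_to_U0:
  assumes "6 \<le> n"
  shows "gdist (gp_adj n 4) (V 0) (U 3) \<le> gdist (gp_adj n 4) (U 0) (U 3)"
proof -
  have "0 < n" "3 < n" using assms by simp_all
  obtain a b where i: "3 = cyc n (a + 4 * b)"
    and cost: "\<bar>a\<bar> + \<bar>b\<bar> + (if b = 0 then 0 else 2) \<le> int (gdist (gp_adj n 4) (U 0) (U 3))"
    using gdist_U0_rim_ge[OF \<open>3 < n\<close>, where k=4] by auto
  have "3 \<le> \<bar>a\<bar> + \<bar>b\<bar> + (if b = 0 then 0 else 2)"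
  proof (cases "b = 0")
    case True
    with i have "cyc n a = cyc n 3" using \<open>3 < n\<close> cyc_of_nat[of 3 n] by simp
    then show ?thesis
      using cyc_eq_imp_eq_or_far[OF \<open>0 < n\<close>] assms True by fastforce
  qed simp
  moreover have "gdist (gp_adj n 4) (V 0) (U 3) \<le> 3"
    using gdist_V0_rim_le[OF \<open>0 < n\<close>, where k=4 and a="-1" and b=1] \<open>3 < n\<close> cyc_of_nat[of 3 n]
    by simp
  ultimately show ?thesis using cost by linarith
qed

definition gp4_near_V0 :: "nat \<Rightarrow> gpv set" where
  "gp4_near_V0 n = U ` {4..n - 4} \<union> (\<lambda>b. V (cyc n (4 * b))) ` {-3..3}"

lemma card_gp4_near_V0:
  assumes "24 < n"
  shows "card (gp4_near_V0 n) = n"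
proof -
  have "0 < n" using assms by simp
  have "inj_on (\<lambda>b. V (cyc n (4 * b))) {-3..3}"
    using cyc_eq_imp_eq_or_far[OF \<open>0 < n\<close>, of "4 * _" "4 * _"] assms by (fastforce simp: inj_on_def)
  then have "card ((\<lambda>b. V (cyc n (4 * b))) ` {-3..3}) = 7"
    by (simp add: card_image)
  moreover have "card (U ` {4..n - 4}) = n - 7"
    using assms by (simp add: card_image inj_on_def)
  ultimately show ?thesis
    unfolding gp4_near_V0_def using assms by (subst card_Un_disjoint) auto
qed

lemma gp4_near_V0_subset_Wset:
  assumes "24 < n"
  shows "gp4_near_V0 n \<subseteq> Wset (gp_verts n) (gp_adj n 4) (V 0) (U 0)"
  using assms gp4_rim_closer_to_V0 gp4_inner_closer_to_V0 cyc_less[of n]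
  unfolding gp4_near_V0_def Wset_def gdist_commute[OF symp_gp_adj, of n 4 _ "V 0"]
    gdist_commute[OF symp_gp_adj, of n 4 _ "U 0"] gp_verts_def
  by auto

lemma card_gp4_far_from_V0:
  assumes "24 < n"
  shows "card (gp_verts n - insert (U 3) (gp4_near_V0 n)) = n - 1"
proof -
  have "U 3 \<notin> gp4_near_V0 n" and fin: "finite (gp4_near_V0 n)"
    unfolding gp4_near_V0_def by auto
  then have "card (insert (U 3) (gp4_near_V0 n)) = n + 1"
    using card_gp4_near_V0[OF assms] by simp
  moreover have "insert (U 3) (gp4_near_V0 n) \<subseteq> gp_verts n"
    using gp4_near_V0_subset_Wset[OF assms] assms unfolding Wset_def gp_verts_def by auto
  ultimately show ?thesis
    using card_Diff_subset[OF finite_insert[THEN iffD2, OF fin]] card_gp_verts by simp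
qed

theorem proposition3p1:
  fixes n :: nat
  assumes "n > 24"
  shows "\<not> distance_balanced (gp_verts n) (gp_adj n 4) 1"
proof
  let ?W = "Wset (gp_verts n) (gp_adj n 4)"
  assume "distance_balanced (gp_verts n) (gp_adj n 4) 1"
  moreover have "gdist (gp_adj n 4) (U 0) (V 0) = 1"
    using assms by (simp add: gdist_eq_1 gp_adj_spoke)
  moreover have "U 0 \<in> gp_verts n" "V 0 \<in> gp_verts n"
    using assms unfolding gp_verts_def by auto
  ultimately have balanced: "card (?W (U 0) (V 0)) = card (?W (V 0) (U 0))"
    unfolding distance_balanced_def by blast
  have "finite (?W x y)" for x y
    unfolding Wset_def using finite_gp_verts by simp
  then have W_V0_U0: "n \<le> card (?W (V 0) (U 0))"
    using card_mono[OF _ gp4_near_V0_subset_Wset[OF assms]] card_gp4_near_V0[OF assms] by simp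
  have "?W (U 0) (V 0) \<subseteq> gp_verts n - insert (U 3) (gp4_near_V0 n)"
    using gp4_near_V0_subset_Wset[OF assms] gp4_U3_not_closer_to_U0[of n] assms
      gdist_commute[OF symp_gp_adj, of n 4 "U 3"]
    unfolding Wset_def by fastforce
  then have "card (?W (U 0) (V 0)) \<le> n - 1"
    using card_mono[OF finite_Diff[OF finite_gp_verts]] card_gp4_far_from_V0[OF assms] by metis
  with W_V0_U0 balanced assms show False by linarith
qed

end
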